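(* There exist infinite diameter, infinite valence graphs $\mathcal G$ that are quasi-isometric to trees but whose Rips complex $R_d(\mathcal G)$ is not $CAT(0)$ for any $d$.
   Context: For a graph $\mathcal G$ and $d>0$, the Rips complex $R_d(\mathcal G)$ is the simplicial complex whose vertices are the vertices of $\mathcal G$ and whose simplices are the finite sets of vertices with pairwise distance $\le d$ in $\mathcal G$ (metrized as a piecewise Euclidean complex with regular simplices). *)

theory Defs
  imports "HOL-Analysis.Analysis"
begin

definition simple_graph :: "'v set \<Rightarrow> ('v \<Rightarrow> 'v \<Rightarrow> bool) \<Rightarrow> bool" where
  "simple_graph V E \<longleftrightarrow> V \<noteq> {} \<and> (\<forall>u v. E u v \<longrightarrow> u \<in> V \<and> v \<in> V)
     \<and> (\<forall>u v. E u v \<longrightarrow> E v u) \<and> (\<forall>u. \<not> E u u)"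

definition walk :: "'v set \<Rightarrow> ('v \<Rightarrow> 'v \<Rightarrow> bool) \<Rightarrow> 'v list \<Rightarrow> bool" where
  "walk V E xs \<longleftrightarrow> xs \<noteq> [] \<and> set xs \<subseteq> V \<and> (\<forall>i < length xs - 1. E (xs ! i) (xs ! Suc i))"

definition connected_graph :: "'v set \<Rightarrow> ('v \<Rightarrow> 'v \<Rightarrow> bool) \<Rightarrow> bool" where
  "connected_graph V E \<longleftrightarrow> (\<forall>u\<in>V. \<forall>v\<in>V. \<exists>xs. walk V E xs \<and> hd xs = u \<and> last xs = v)"

definition gdist :: "'v set \<Rightarrow> ('v \<Rightarrow> 'v \<Rightarrow> bool) \<Rightarrow> 'v \<Rightarrow> 'v \<Rightarrow> nat" where
  "gdist V E u v = (LEAST n. \<exists>xs. walk V E xs \<and> hd xs = u \<and> last xs = v \<and> length xs = Suc n)"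

definition has_cycle :: "'v set \<Rightarrow> ('v \<Rightarrow> 'v \<Rightarrow> bool) \<Rightarrow> bool" where
  "has_cycle V E \<longleftrightarrow> (\<exists>xs. walk V E xs \<and> distinct xs \<and> length xs \<ge> 3 \<and> E (last xs) (hd xs))"

definition is_tree :: "'v set \<Rightarrow> ('v \<Rightarrow> 'v \<Rightarrow> bool) \<Rightarrow> bool" where
  "is_tree V E \<longleftrightarrow> simple_graph V E \<and> connected_graph V E \<and> \<not> has_cycle V E"

definition quasi_isometric ::
  "'v set \<Rightarrow> ('v \<Rightarrow> 'v \<Rightarrow> bool) \<Rightarrow> 'w set \<Rightarrow> ('w \<Rightarrow> 'w \<Rightarrow> bool) \<Rightarrow> bool" where
  "quasi_isometric V E W F \<longleftrightarrow>
     (\<exists>f lam C. lam \<ge> 1 \<and> C \<ge> 0 \<and> f ` V \<subseteq> W \<and>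
        (\<forall>x\<in>V. \<forall>y\<in>V.
           real (gdist V E x y) / lam - C \<le> real (gdist W F (f x) (f y)) \<and>
           real (gdist W F (f x) (f y)) \<le> lam * real (gdist V E x y) + C) \<and>
        (\<forall>z\<in>W. \<exists>x\<in>V. real (gdist W F (f x) z) \<le> C))"

definition rips_simplex :: "'v set \<Rightarrow> ('v \<Rightarrow> 'v \<Rightarrow> bool) \<Rightarrow> real \<Rightarrow> 'v set \<Rightarrow> bool" where
  "rips_simplex V E d S \<longleftrightarrow> finite S \<and> S \<noteq> {} \<and> S \<subseteq> V \<and>
     (\<forall>u\<in>S. \<forall>v\<in>S. real (gdist V E u v) \<le> d)"

definition bsupp :: "('v \<Rightarrow> real) \<Rightarrow> 'v set" where
  "bsupp x = {v. x v \<noteq> 0}"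

text \<open>Points of the geometric realization, in barycentric coordinates.\<close>
definition rips_points :: "'v set \<Rightarrow> ('v \<Rightarrow> 'v \<Rightarrow> bool) \<Rightarrow> real \<Rightarrow> ('v \<Rightarrow> real) set" where
  "rips_points V E d = {x. (\<forall>v. x v \<ge> 0) \<and> rips_simplex V E d (bsupp x) \<and> sum x (bsupp x) = 1}"

text \<open>Euclidean distance inside a common regular simplex with edge length 1
  (vertex v realised as the point e_v / sqrt 2).\<close>
definition simplex_dist :: "('v \<Rightarrow> real) \<Rightarrow> ('v \<Rightarrow> real) \<Rightarrow> real" where
  "simplex_dist x y = sqrt ((\<Sum>v\<in>bsupp x \<union> bsupp y. (x v - y v)^2) / 2)"

text \<open>Intrinsic (length) metric: infimum of lengths of strings of points,
  consecutive points lying in a common simplex.\<close>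
definition rips_chain :: "'v set \<Rightarrow> ('v \<Rightarrow> 'v \<Rightarrow> bool) \<Rightarrow> real \<Rightarrow> ('v \<Rightarrow> real) list \<Rightarrow> bool" where
  "rips_chain V E d ps \<longleftrightarrow> ps \<noteq> [] \<and> set ps \<subseteq> rips_points V E d \<and>
     (\<forall>i < length ps - 1. rips_simplex V E d (bsupp (ps ! i) \<union> bsupp (ps ! Suc i)))"

definition rips_dist :: "'v set \<Rightarrow> ('v \<Rightarrow> 'v \<Rightarrow> bool) \<Rightarrow> real \<Rightarrow> ('v \<Rightarrow> real) \<Rightarrow> ('v \<Rightarrow> real) \<Rightarrow> real" where
  "rips_dist V E d x y = Inf {(\<Sum>i < length ps - 1. simplex_dist (ps ! i) (ps ! Suc i)) | ps.
        rips_chain V E d ps \<and> hd ps = x \<and> last ps = y}"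

definition is_metric_on :: "'p set \<Rightarrow> ('p \<Rightarrow> 'p \<Rightarrow> real) \<Rightarrow> bool" where
  "is_metric_on X dd \<longleftrightarrow> (\<forall>x\<in>X. \<forall>y\<in>X. dd x y \<ge> 0 \<and> (dd x y = 0 \<longleftrightarrow> x = y) \<and> dd x y = dd y x) \<and>
     (\<forall>x\<in>X. \<forall>y\<in>X. \<forall>z\<in>X. dd x z \<le> dd x y + dd y z)"

definition geodesic_seg :: "'p set \<Rightarrow> ('p \<Rightarrow> 'p \<Rightarrow> real) \<Rightarrow> (real \<Rightarrow> 'p) \<Rightarrow> 'p \<Rightarrow> 'p \<Rightarrow> bool" where
  "geodesic_seg X dd g x y \<longleftrightarrow> g 0 = x \<and> g (dd x y) = y \<and> (\<forall>s\<in>{0..dd x y}. g s \<in> X) \<and>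
     (\<forall>s\<in>{0..dd x y}. \<forall>t\<in>{0..dd x y}. dd (g s) (g t) = \<bar>s - t\<bar>)"

definition geodesic_space :: "'p set \<Rightarrow> ('p \<Rightarrow> 'p \<Rightarrow> real) \<Rightarrow> bool" where
  "geodesic_space X dd \<longleftrightarrow> is_metric_on X dd \<and> (\<forall>x\<in>X. \<forall>y\<in>X. \<exists>g. geodesic_seg X dd g x y)"

text \<open>CAT(0): geodesic, and every geodesic triangle (vertices x 0, x 1, x 2, sides g i from
  x i to x (i+1 mod 3)) is no fatter than its Euclidean comparison triangle P 0, P 1, P 2
  in the plane (here the complex plane).\<close>
definition CAT0 :: "'p set \<Rightarrow> ('p \<Rightarrow> 'p \<Rightarrow> real) \<Rightarrow> bool" where
  "CAT0 X dd \<longleftrightarrow> geodesic_space X dd \<and>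
    (\<forall>(x :: nat \<Rightarrow> 'p) (g :: nat \<Rightarrow> real \<Rightarrow> 'p) (P :: nat \<Rightarrow> complex).
       (\<forall>i<3. x i \<in> X) \<longrightarrow>
       (\<forall>i<3. geodesic_seg X dd (g i) (x i) (x (Suc i mod 3))) \<longrightarrow>
       (\<forall>i<3. cmod (P (Suc i mod 3) - P i) = dd (x i) (x (Suc i mod 3))) \<longrightarrow>
       (\<forall>i<3. \<forall>j<3. \<forall>s\<in>{0..dd (x i) (x (Suc i mod 3))}. \<forall>t\<in>{0..dd (x j) (x (Suc j mod 3))}.
          dd (g i s) (g j t) \<le>
          cmod ((P i + of_real (s / dd (x i) (x (Suc i mod 3))) * (P (Suc i mod 3) - P i))
              - (P j + of_real (t / dd (x j) (x (Suc j mod 3))) * (P (Suc j mod 3) - P j)))))"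

end

theory Submission
  imports Defs "HOL-Library.Nat_Bijection" "HOL-Combinatorics.Transposition"
begin

text \<open>
  Take the graph on the vertices (k, j) of \<open>\<nat> \<times> \<nat>\<close> in which every vertex of level k is joined
  to every vertex of levels k - 1 and k + 1. The level map is a quasi-isometry onto the
  ray, and the graph has infinite valence and infinite diameter. In a CAT(0) space geodesics
  are unique, so an isometry fixing two points fixes the geodesic between them. Transposing
  two vertices of the same level is a graph automorphism and acts isometrically on the Rips
  complex. For vertices p, q at distance more than d, the midpoint of the geodesic from p to q
  is therefore fixed by every transposition within a level avoiding p and q; as its support
  is finite, it lies in {p, q}, and since p and q span no simplex the midpoint would be an
  endpoint, which is absurd.
\<close>

lemma walk_singleton [simp]: "walk V E [x] \<longleftrightarrow> x \<in> V"
  by (simp add: walk_def)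

lemma walk_Cons_Cons:
  "walk V E (x # y # ys) \<longleftrightarrow> x \<in> V \<and> E x y \<and> walk V E (y # ys)"
  unfolding walk_def by (auto simp: All_less_Suc2)

lemma walk_snoc:
  assumes "walk V E xs" "E (last xs) y" "y \<in> V"
  shows "walk V E (xs @ [y])"
  using assms
proof (induction xs rule: induct_list012)
  case (3 x z zs)
  then show ?case by (cases zs) (auto simp: walk_Cons_Cons)
qed (auto simp: walk_def)

lemma walk_rev:
  assumes sym: "\<And>u v. E u v \<Longrightarrow> E v u" and "walk V E xs"
  shows "walk V E (rev xs)"
  using assms(2)
proof (induction xs rule: induct_list012)
  case (3 x y ys)
  then have "walk V E (rev (y # ys))" by (simp add: walk_Cons_Cons)
  moreover have "E (last (rev (y # ys))) x" "x \<in> V"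
    using 3(3) by (auto simp: walk_Cons_Cons sym)
  ultimately show ?case
    using walk_snoc by fastforce
qed (auto simp: walk_def)

lemma walk_map:
  assumes "walk V E xs" "\<And>v. v \<in> V \<Longrightarrow> f v \<in> W" "\<And>u v. E u v \<Longrightarrow> F (f u) (f v)"
  shows "walk W F (map f xs)"
  using assms unfolding walk_def by auto

lemma gdist_le_length:
  assumes "walk V E xs" "hd xs = u" "last xs = v"
  shows "gdist V E u v \<le> length xs - 1"
proof -
  have "length xs = Suc (length xs - 1)"
    using assms by (cases xs) (auto simp: walk_def)
  then show ?thesis
    unfolding gdist_def using assms by (intro Least_le) blast
qed

lemma walk_of_length_gdist:
  assumes "walk V E xs" "hd xs = u" "last xs = v"
  obtains ys where "walk V E ys" "hd ys = u" "last ys = v" "length ys = Suc (gdist V E u v)"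
proof -
  have "length xs = Suc (length xs - 1)"
    using assms by (cases xs) (auto simp: walk_def)
  then have "\<exists>n ys. walk V E ys \<and> hd ys = u \<and> last ys = v \<and> length ys = Suc n"
    using assms by blast
  from LeastI_ex[OF this] show ?thesis
    using that unfolding gdist_def by blast
qed

lemma walk_height_bound:
  fixes h :: "'v \<Rightarrow> real"
  assumes lip: "\<And>u v. E u v \<Longrightarrow> \<bar>h u - h v\<bar> \<le> 1" and "walk V E xs"
  shows "\<bar>h (hd xs) - h (last xs)\<bar> \<le> real (length xs - 1)"
  using assms(2)
proof (induction xs rule: induct_list012)
  case (3 x y ys)
  then have "\<bar>h y - h (last (y # ys))\<bar> \<le> real (length ys)" and "\<bar>h x - h y\<bar> \<le> 1"
    by (auto simp: walk_Cons_Cons lip)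
  then show ?case by simp
qed (auto simp: walk_def)

lemma gdist_ge_height_diff:
  fixes h :: "'v \<Rightarrow> real"
  assumes "\<And>u v. E u v \<Longrightarrow> \<bar>h u - h v\<bar> \<le> 1"
    and "walk V E xs" "hd xs = a" "last xs = b"
  shows "\<bar>h a - h b\<bar> \<le> real (gdist V E a b)"
proof -
  obtain ys where "walk V E ys" "hd ys = a" "last ys = b" "length ys = Suc (gdist V E a b)"
    using walk_of_length_gdist assms(2-4) by metis
  then show ?thesis using walk_height_bound[OF assms(1)] by fastforce
qed

lemma gdist_refl: "a \<in> V \<Longrightarrow> gdist V E a a = 0"
  unfolding gdist_def by (rule Least_eq_0) (rule exI[of _ "[a]"], simp)

definition rips_vertex :: "'v \<Rightarrow> 'v \<Rightarrow> real" where
  "rips_vertex a v = (if v = a then 1 else 0)"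

lemma bsupp_rips_vertex [simp]: "bsupp (rips_vertex a) = {a}"
  by (auto simp: bsupp_def rips_vertex_def)

lemma rips_vertex_inject [simp]: "rips_vertex a = rips_vertex b \<longleftrightarrow> a = b"
  by (metis bsupp_rips_vertex singleton_inject)

lemma rips_vertex_in_rips_points:
  "a \<in> V \<Longrightarrow> d \<ge> 0 \<Longrightarrow> rips_vertex a \<in> rips_points V E d"
  by (auto simp: rips_points_def rips_simplex_def gdist_refl) (simp_all add: rips_vertex_def)

lemma rips_points_singleton_support:
  assumes "z \<in> rips_points V E d" "bsupp z = {a}"
  shows "z = rips_vertex a"
proof
  fix v
  have "z a = 1" using assms by (simp add: rips_points_def)
  moreover have "z v = 0" if "v \<noteq> a" using assms that by (auto simp: bsupp_def)
  ultimately show "z v = rips_vertex a v" by (simp add: rips_vertex_def)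
qed

locale graph_involution =
  fixes V :: "'v set" and E :: "'v \<Rightarrow> 'v \<Rightarrow> bool" and \<sigma> :: "'v \<Rightarrow> 'v"
  assumes involutive [simp]: "\<sigma> (\<sigma> v) = v"
    and maps_vertices: "v \<in> V \<Longrightarrow> \<sigma> v \<in> V"
    and preserves_edges [simp]: "E (\<sigma> u) (\<sigma> v) = E u v"
begin

lemma inj_\<sigma>: "inj \<sigma>"
  by (metis injI involutive)

lemma walk_map_\<sigma>: "walk V E xs \<Longrightarrow> walk V E (map \<sigma> xs)"
  by (rule walk_map) (auto intro: maps_vertices)

lemma gdist_\<sigma> [simp]: "gdist V E (\<sigma> a) (\<sigma> b) = gdist V E a b"
proof -
  have walk_\<sigma>: "walk V E (map \<sigma> xs) \<and> hd (map \<sigma> xs) = \<sigma> a \<and> last (map \<sigma> xs) = \<sigma> b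
      \<and> length (map \<sigma> xs) = length xs"
    if "walk V E xs" "hd xs = a" "last xs = b" for xs a b
    using that walk_map_\<sigma> by (auto simp: walk_def hd_map last_map)
  have "(\<exists>xs. walk V E xs \<and> hd xs = \<sigma> a \<and> last xs = \<sigma> b \<and> length xs = Suc n)
      \<longleftrightarrow> (\<exists>xs. walk V E xs \<and> hd xs = a \<and> last xs = b \<and> length xs = Suc n)" for n
    using walk_\<sigma>[of _ "\<sigma> a" "\<sigma> b"] walk_\<sigma>[of _ a b] by (metis involutive)
  then show ?thesis
    unfolding gdist_def by simp
qed

lemma bsupp_comp: "bsupp (z \<circ> \<sigma>) = \<sigma> ` bsupp z"
  by (auto simp: bsupp_def image_iff) (metis involutive)

lemma sum_comp_image: "sum (f \<circ> \<sigma>) (\<sigma> ` S) = sum f S"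
  by (simp add: sum.reindex[OF inj_on_subset[OF inj_\<sigma> subset_UNIV]] o_def)

lemma rips_simplex_image: "rips_simplex V E d S \<Longrightarrow> rips_simplex V E d (\<sigma> ` S)"
  unfolding rips_simplex_def by (auto intro: maps_vertices)

lemma rips_points_comp: "z \<in> rips_points V E d \<Longrightarrow> z \<circ> \<sigma> \<in> rips_points V E d"
  unfolding rips_points_def
  by (auto simp: bsupp_comp sum_comp_image rips_simplex_image simp del: comp_apply)
    (simp add: o_def)

lemma simplex_dist_comp: "simplex_dist (a \<circ> \<sigma>) (b \<circ> \<sigma>) = simplex_dist a b"
proof -
  have "(\<lambda>v. ((a \<circ> \<sigma>) v - (b \<circ> \<sigma>) v)^2) = (\<lambda>v. (a v - b v)^2) \<circ> \<sigma>"
    by auto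
  then show ?thesis
    unfolding simplex_dist_def bsupp_comp image_Un[symmetric] by (simp only: sum_comp_image)
qed

lemma rips_chain_map: "rips_chain V E d ps \<Longrightarrow> rips_chain V E d (map (\<lambda>z. z \<circ> \<sigma>) ps)"
  unfolding rips_chain_def
  by (auto simp: rips_points_comp bsupp_comp simp flip: image_Un intro: rips_simplex_image)

lemma rips_dist_comp: "rips_dist V E d (a \<circ> \<sigma>) (b \<circ> \<sigma>) = rips_dist V E d a b"
proof -
  define lengths where "lengths a b = {(\<Sum>i < length ps - 1. simplex_dist (ps ! i) (ps ! Suc i)) | ps.
      rips_chain V E d ps \<and> hd ps = a \<and> last ps = b}" for a b
  have lengths_mono: "lengths a b \<subseteq> lengths (a \<circ> \<sigma>) (b \<circ> \<sigma>)" for a b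
  proof
    fix r assume "r \<in> lengths a b"
    then obtain ps where ps: "rips_chain V E d ps" "hd ps = a" "last ps = b"
      and r: "r = (\<Sum>i < length ps - 1. simplex_dist (ps ! i) (ps ! Suc i))"
      unfolding lengths_def by blast
    define qs where "qs = map (\<lambda>z. z \<circ> \<sigma>) ps"
    have "ps \<noteq> []" using ps(1) by (simp add: rips_chain_def)
    then have "hd qs = a \<circ> \<sigma>" "last qs = b \<circ> \<sigma>"
      using ps by (auto simp: qs_def hd_map last_map)
    moreover have "r = (\<Sum>i < length qs - 1. simplex_dist (qs ! i) (qs ! Suc i))"
      unfolding r qs_def by (rule sum.cong) (auto simp: simplex_dist_comp)
    ultimately show "r \<in> lengths (a \<circ> \<sigma>) (b \<circ> \<sigma>)"
      unfolding lengths_def qs_def using rips_chain_map[OF ps(1)] by blast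
  qed
  have "z \<circ> \<sigma> \<circ> \<sigma> = z" for z :: "'v \<Rightarrow> real"
    by (simp add: fun_eq_iff)
  then have "lengths (a \<circ> \<sigma>) (b \<circ> \<sigma>) = lengths a b"
    using lengths_mono[of a b] lengths_mono[of "a \<circ> \<sigma>" "b \<circ> \<sigma>"] by auto
  then show ?thesis
    unfolding rips_dist_def lengths_def by simp
qed

end

lemma (in graph_involution) rips_vertex_comp: "rips_vertex a \<circ> \<sigma> = rips_vertex (\<sigma> a)"
  by (auto simp: rips_vertex_def fun_eq_iff)

section \<open>Uniqueness of geodesics in CAT(0) spaces\<close>

lemma geodesic_seg_reverse:
  assumes "is_metric_on X dd" "x \<in> X" "y \<in> X" "geodesic_seg X dd g x y"
  shows "geodesic_seg X dd (\<lambda>t. g (dd x y - t)) y x"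
proof -
  have "dd y x = dd x y" using assms(1-3) by (simp add: is_metric_on_def)
  then show ?thesis using assms(4) unfolding geodesic_seg_def by (auto simp: abs_minus_commute)
qed

lemma geodesic_seg_const:
  assumes "is_metric_on X dd" "x \<in> X"
  shows "geodesic_seg X dd (\<lambda>_. x) x x"
proof -
  have "dd x x = 0" using assms by (simp add: is_metric_on_def)
  then show ?thesis using assms(2) by (simp add: geodesic_seg_def)
qed

lemma CAT0_geodesic_unique:
  assumes cat: "CAT0 X dd" and "x \<in> X" "y \<in> X"
    and g: "geodesic_seg X dd g x y" and h: "geodesic_seg X dd h x y"
    and s: "s \<in> {0..dd x y}"
  shows "g s = h s"
proof -
  define L where "L = dd x y"
  have met: "is_metric_on X dd" using cat by (simp add: CAT0_def geodesic_space_def)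
  then have L_sym: "dd y x = L" and dd_xx: "dd x x = 0" and "L \<ge> 0"
    using \<open>x \<in> X\<close> \<open>y \<in> X\<close> by (auto simp: is_metric_on_def L_def)
  show ?thesis
  proof (cases "L = 0")
    case True
    then show ?thesis using g h s by (simp add: geodesic_seg_def L_def)
  next
    case False
    \<comment> \<open>The degenerate triangle x, y, x with sides g, h reversed and a constant path
      has comparison triangle 0, L, 0, in which g s and h s both correspond to the point s.\<close>
    define xs where "xs i = (if i = 1 then y else x)" for i :: nat
    define gs where "gs i = (if i = 0 then g else if i = 1 then (\<lambda>t. h (L - t)) else (\<lambda>_. x))"
      for i :: nat
    define P where "P i = (if i = 1 then complex_of_real L else 0)" for i :: nat
    have three: "(\<forall>i<3. Q i) \<longleftrightarrow> Q 0 \<and> Q 1 \<and> Q 2" for Q :: "nat \<Rightarrow> bool"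
      by (auto simp: numeral_3_eq_3 numeral_2_eq_2 less_Suc_eq)
    have vertices: "\<forall>i<3. xs i \<in> X"
      unfolding three xs_def using assms by simp
    moreover have sides: "\<forall>i<3. geodesic_seg X dd (gs i) (xs i) (xs (Suc i mod 3))"
      unfolding three xs_def gs_def L_def
      using g geodesic_seg_reverse[OF met \<open>x \<in> X\<close> \<open>y \<in> X\<close> h] geodesic_seg_const[OF met \<open>x \<in> X\<close>]
      by simp
    moreover have comparison: "\<forall>i<3. cmod (P (Suc i mod 3) - P i) = dd (xs i) (xs (Suc i mod 3))"
      unfolding three xs_def P_def using L_sym dd_xx \<open>L \<ge> 0\<close> by (simp flip: L_def)
    ultimately have "dd (gs 0 s) (gs 1 (L - s)) \<le>
        cmod ((P 0 + of_real (s / dd (xs 0) (xs 1)) * (P 1 - P 0))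
          - (P 1 + of_real ((L - s) / dd (xs 1) (xs 2)) * (P 2 - P 1)))"
      using cat[unfolded CAT0_def, THEN conjunct2, rule_format, of xs gs P,
          OF vertices[rule_format] sides[rule_format] comparison[rule_format],
          of 0 1 s "L - s"] s L_sym
      by (simp add: xs_def L_def numeral_2_eq_2)
    also have "\<dots> = 0"
      using False by (simp add: xs_def P_def L_sym flip: L_def)
    finally have "dd (g s) (h s) \<le> 0"
      by (simp add: gs_def)
    moreover have "g s \<in> X" "h s \<in> X"
      using g h s by (auto simp: geodesic_seg_def)
    ultimately show ?thesis
      using met unfolding is_metric_on_def by (metis order_antisym)
  qed
qed

lemma CAT0_isometry_fixes_geodesic:
  assumes cat: "CAT0 X dd" and "x \<in> X" "y \<in> X" and g: "geodesic_seg X dd g x y"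
    and f_X: "\<And>z. z \<in> X \<Longrightarrow> f z \<in> X"
    and f_isometry: "\<And>a b. a \<in> X \<Longrightarrow> b \<in> X \<Longrightarrow> dd (f a) (f b) = dd a b"
    and "f x = x" "f y = y" and s: "s \<in> {0..dd x y}"
  shows "f (g s) = g s"
proof -
  have "geodesic_seg X dd (f \<circ> g) x y"
    using g \<open>f x = x\<close> \<open>f y = y\<close> unfolding geodesic_seg_def by (auto simp: f_X f_isometry)
  from CAT0_geodesic_unique[OF cat \<open>x \<in> X\<close> \<open>y \<in> X\<close> this g s] show ?thesis by simp
qed

section \<open>The layered graph and the ray\<close>

definition level :: "nat \<Rightarrow> nat" where
  "level v = fst (prod_decode v)"

definition vertex :: "nat \<Rightarrow> nat \<Rightarrow> nat" where
  "vertex k j = prod_encode (k, j)"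

definition layered_edge :: "nat \<Rightarrow> nat \<Rightarrow> bool" where
  "layered_edge u v \<longleftrightarrow> level u = Suc (level v) \<or> level v = Suc (level u)"

definition ray_edge :: "nat \<Rightarrow> nat \<Rightarrow> bool" where
  "ray_edge a b \<longleftrightarrow> a = Suc b \<or> b = Suc a"

lemma level_vertex [simp]: "level (vertex k j) = k"
  by (simp add: level_def vertex_def prod_encode_inverse)

lemma inj_vertex: "inj (vertex k)"
  by (auto simp: inj_def vertex_def)

lemma layered_edge_sym: "layered_edge u v \<Longrightarrow> layered_edge v u"
  by (auto simp: layered_edge_def)

lemma simple_graph_layered: "simple_graph UNIV layered_edge"
  by (auto simp: simple_graph_def layered_edge_def)

lemma layered_walk_up:
  assumes "level u \<le> level v"
  shows "\<exists>xs. walk UNIV layered_edge xs \<and> hd xs = u \<and> last xs = v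
    \<and> length xs = level v - level u + 3"
  using assms
proof (induction "level v - level u" arbitrary: v)
  case 0
  then have "walk UNIV layered_edge [u, vertex (Suc (level u)) 0, v]"
    by (simp add: walk_Cons_Cons layered_edge_def)
  then show ?case using 0 by force
next
  case (Suc n)
  define w where "w = vertex (level v - 1) 0"
  have "n = level w - level u" "level u \<le> level w"
    using Suc.hyps(2) by (auto simp: w_def)
  then obtain xs where xs: "walk UNIV layered_edge xs" "hd xs = u" "last xs = w"
    "length xs = level w - level u + 3"
    using Suc.hyps(1) by blast
  have "walk UNIV layered_edge (xs @ [v])"
    using xs Suc.hyps(2) by (intro walk_snoc) (auto simp: w_def layered_edge_def)
  moreover have "xs \<noteq> []" using xs(1) by (simp add: walk_def)
  ultimately show ?case
    using xs Suc.hyps(2) by (intro exI[of _ "xs @ [v]"]) (auto simp: w_def)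
qed

lemma layered_walk:
  "\<exists>xs. walk UNIV layered_edge xs \<and> hd xs = u \<and> last xs = v
    \<and> real (length xs) = \<bar>real (level u) - real (level v)\<bar> + 3"
proof (cases "level u \<le> level v")
  case True
  then show ?thesis using layered_walk_up[OF True] by force
next
  case False
  then obtain xs where xs: "walk UNIV layered_edge xs" "hd xs = v" "last xs = u"
    "length xs = level u - level v + 3"
    using layered_walk_up[of v u] by auto
  then have "xs \<noteq> []" by (auto simp: walk_def)
  then show ?thesis
    using False xs walk_rev[OF layered_edge_sym xs(1)]
    by (intro exI[of _ "rev xs"]) (simp add: hd_rev last_rev)
qed

lemma connected_graph_layered: "connected_graph UNIV layered_edge"
  unfolding connected_graph_def using layered_walk by blast

lemma gdist_layered:
  "\<bar>real (level u) - real (level v)\<bar> \<le> real (gdist UNIV layered_edge u v)"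
  "real (gdist UNIV layered_edge u v) \<le> \<bar>real (level u) - real (level v)\<bar> + 2"
proof -
  obtain xs where xs: "walk UNIV layered_edge xs" "hd xs = u" "last xs = v"
    "real (length xs) = \<bar>real (level u) - real (level v)\<bar> + 3"
    using layered_walk by blast
  have "\<And>a b. layered_edge a b \<Longrightarrow> \<bar>real (level a) - real (level b)\<bar> \<le> 1"
    by (auto simp: layered_edge_def)
  from gdist_ge_height_diff[OF this xs(1-3)]
  show "\<bar>real (level u) - real (level v)\<bar> \<le> real (gdist UNIV layered_edge u v)" .
  have "xs \<noteq> []" using xs(1) by (simp add: walk_def)
  then show "real (gdist UNIV layered_edge u v) \<le> \<bar>real (level u) - real (level v)\<bar> + 2"
    using gdist_le_length[OF xs(1-3)] xs(4) by (simp add: of_nat_diff)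
qed

lemma unbounded_gdist_layered: "\<exists>u v. gdist UNIV layered_edge u v > n"
proof -
  have "real (Suc n) \<le> real (gdist UNIV layered_edge (vertex 0 0) (vertex (Suc n) 0))"
    using gdist_layered(1)[of "vertex 0 0" "vertex (Suc n) 0"] by simp
  then show ?thesis by (metis Suc_le_eq of_nat_le_iff)
qed

lemma infinite_neighbours_layered: "infinite {w. layered_edge (vertex 0 0) w}"
proof -
  have "range (vertex 1) \<subseteq> {w. layered_edge (vertex 0 0) w}"
    by (auto simp: layered_edge_def)
  moreover have "infinite (range (vertex 1))"
    using inj_vertex by (simp add: range_inj_infinite)
  ultimately show ?thesis using finite_subset by blast
qed

lemma walk_ray_upt: "a \<le> b \<Longrightarrow> walk UNIV ray_edge [a..<Suc b]"
  by (auto simp: walk_def ray_edge_def nth_upt simp del: upt_Suc)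

lemma ray_walk:
  "\<exists>xs. walk UNIV ray_edge xs \<and> hd xs = a \<and> last xs = b
    \<and> real (length xs) = \<bar>real a - real b\<bar> + 1"
proof (cases "a \<le> b")
  case True
  then show ?thesis
    using walk_ray_upt[OF True] by (intro exI[of _ "[a..<Suc b]"]) (simp add: hd_upt del: upt_Suc)
next
  case False
  then have "walk UNIV ray_edge (rev [b..<Suc a])"
    by (intro walk_rev walk_ray_upt) (auto simp: ray_edge_def)
  then show ?thesis
    using False by (intro exI[of _ "rev [b..<Suc a]"]) (simp add: hd_rev last_rev hd_upt del: upt_Suc)
qed

lemma gdist_ray: "real (gdist UNIV ray_edge a b) = \<bar>real a - real b\<bar>"
proof -
  obtain xs where xs: "walk UNIV ray_edge xs" "hd xs = a" "last xs = b"
    "real (length xs) = \<bar>real a - real b\<bar> + 1"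
    using ray_walk by blast
  have "\<And>u v. ray_edge u v \<Longrightarrow> \<bar>real u - real v\<bar> \<le> 1"
    by (auto simp: ray_edge_def)
  from gdist_ge_height_diff[OF this xs(1-3)]
  have "\<bar>real a - real b\<bar> \<le> real (gdist UNIV ray_edge a b)" .
  moreover have "xs \<noteq> []" using xs(1) by (simp add: walk_def)
  then have "real (gdist UNIV ray_edge a b) \<le> \<bar>real a - real b\<bar>"
    using gdist_le_length[OF xs(1-3)] xs(4) by (simp add: of_nat_diff)
  ultimately show ?thesis by linarith
qed

lemma ray_acyclic: "\<not> has_cycle UNIV ray_edge"
proof
  assume "has_cycle UNIV ray_edge"
  then obtain xs where walk: "walk UNIV ray_edge xs" and "distinct xs" and len: "length xs \<ge> 3"
    and closing: "ray_edge (last xs) (hd xs)"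
    unfolding has_cycle_def by blast
  define n where "n = length xs"
  define M where "M = Max (set xs)"
  have "xs \<noteq> []" using len by auto
  then obtain k where k: "k < n" "xs ! k = M"
    unfolding M_def n_def by (metis Max_in finite_set in_set_conv_nth set_empty)
  \<comment> \<open>both cyclic neighbours of the maximum must be M - 1\<close>
  have below_max: "xs ! i = M - 1" if "i < n" "ray_edge (xs ! i) M \<or> ray_edge M (xs ! i)" for i
  proof -
    have "xs ! i \<le> M" unfolding M_def n_def using that(1) n_def by (intro Max_ge) auto
    then show ?thesis using that(2) by (auto simp: ray_edge_def)
  qed
  have step: "ray_edge (xs ! i) (xs ! Suc i)" if "Suc i < n" for i
    using walk that unfolding walk_def n_def by auto
  have wrap: "ray_edge (xs ! (n - 1)) (xs ! 0)"
    using closing \<open>xs \<noteq> []\<close> by (simp add: hd_conv_nth last_conv_nth n_def)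
  define next_k where "next_k = (if Suc k < n then Suc k else 0)"
  define prev_k where "prev_k = (if k > 0 then k - 1 else n - 1)"
  have "next_k < n" "prev_k < n" "next_k \<noteq> prev_k"
    using k len by (auto simp: next_k_def prev_k_def n_def)
  moreover have "ray_edge M (xs ! next_k)"
  proof (cases "Suc k < n")
    case False
    then have "k = n - 1" using k by linarith
    then show ?thesis using wrap k False by (simp add: next_k_def)
  qed (use step[of k] k in \<open>simp add: next_k_def\<close>)
  moreover have "ray_edge (xs ! prev_k) M"
    using step[of "k - 1"] wrap k by (cases "k > 0") (auto simp: prev_k_def)
  ultimately show False
    using below_max \<open>distinct xs\<close> by (metis n_def nth_eq_iff_index_eq)
qed

lemma tree_ray: "is_tree UNIV ray_edge"
  unfolding is_tree_def connected_graph_def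
  using ray_walk ray_acyclic by (auto simp: simple_graph_def ray_edge_def)

lemma quasi_isometric_layered_ray: "quasi_isometric UNIV layered_edge UNIV ray_edge"
proof -
  have "real (gdist UNIV layered_edge u v) / 1 - 2 \<le> real (gdist UNIV ray_edge (level u) (level v))"
    "real (gdist UNIV ray_edge (level u) (level v)) \<le> 1 * real (gdist UNIV layered_edge u v) + 2"
    for u v using gdist_layered[of u v] by (simp_all add: gdist_ray)
  moreover have "\<forall>k\<in>UNIV. \<exists>v\<in>UNIV. real (gdist UNIV ray_edge (level v) k) \<le> 2"
  proof
    fix k
    show "\<exists>v\<in>UNIV. real (gdist UNIV ray_edge (level v) k) \<le> 2"
      by (rule bexI[of _ "vertex k 0"]) (simp_all add: gdist_ray)
  qed
  ultimately show ?thesis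
    unfolding quasi_isometric_def
    by - (rule exI[of _ level], rule exI[of _ "1::real"], rule exI[of _ "2::real"], simp)
qed

lemma graph_involution_transpose_level:
  assumes "level u = level w"
  shows "graph_involution UNIV layered_edge (Transposition.transpose u w)"
proof -
  have "level (Transposition.transpose u w v) = level v" for v
    using assms by (cases "v = u \<or> v = w") auto
  then show ?thesis
    by unfold_locales (auto simp: layered_edge_def)
qed

lemma bsupp_subset_if_level_symmetric:
  assumes "finite (bsupp z)" "finite A"
    and symmetric: "\<And>u w. level u = level w \<Longrightarrow> u \<notin> A \<Longrightarrow> w \<notin> A \<Longrightarrow> z \<circ> Transposition.transpose u w = z"
  shows "bsupp z \<subseteq> A"
proof
  fix u assume u: "u \<in> bsupp z"
  show "u \<in> A"
  proof (rule ccontr)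
    assume "u \<notin> A"
    \<comment> \<open>every vertex of the level of u outside A carries the same weight as u\<close>
    have "range (vertex (level u)) \<subseteq> bsupp z \<union> A"
    proof
      fix w assume "w \<in> range (vertex (level u))"
      then have "level u = level w" by auto
      show "w \<in> bsupp z \<union> A"
      proof (cases "w \<in> A")
        case False
        then have "(z \<circ> Transposition.transpose u w) w = z w"
          using symmetric[OF \<open>level u = level w\<close> \<open>u \<notin> A\<close>] by simp
        then have "z u = z w" by simp
        then show ?thesis using u by (simp add: bsupp_def)
      qed simp
    qed
    moreover have "infinite (range (vertex (level u)))"
      using inj_vertex by (simp add: range_inj_infinite)
    ultimately show False
      using finite_subset assms(1,2) by blast
  qed
qed

lemma rips_layered_not_CAT0:
  assumes "d > 0"
  shows "\<not> CAT0 (rips_points UNIV layered_edge d) (rips_dist UNIV layered_edge d)"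
proof
  define X where "X = rips_points UNIV layered_edge d"
  define dd where "dd = rips_dist UNIV layered_edge d"
  assume "CAT0 (rips_points UNIV layered_edge d) (rips_dist UNIV layered_edge d)"
  then have cat: "CAT0 X dd" by (simp add: X_def dd_def)
  then have met: "is_metric_on X dd" and geo: "\<forall>x\<in>X. \<forall>y\<in>X. \<exists>g. geodesic_seg X dd g x y"
    by (auto simp: CAT0_def geodesic_space_def)
  obtain N :: nat where "d < real N" using reals_Archimedean2 by blast
  define p where "p = vertex 0 0"
  define q where "q = vertex N 0"
  have far: "d < real (gdist UNIV layered_edge p q)"
    using gdist_layered(1)[of p q] \<open>d < real N\<close> by (simp add: p_def q_def)
  have "p \<noteq> q" using far \<open>d > 0\<close> by (auto simp: gdist_refl)
  define x where "x = rips_vertex p"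
  define y where "y = rips_vertex q"
  have "x \<in> X" "y \<in> X"
    using \<open>d > 0\<close> by (simp_all add: x_def y_def X_def rips_vertex_in_rips_points)
  then obtain g where g: "geodesic_seg X dd g x y" using geo by blast
  define L where "L = dd x y"
  have "x \<noteq> y" using \<open>p \<noteq> q\<close> by (simp add: x_def y_def)
  then have "L > 0"
    using met \<open>x \<in> X\<close> \<open>y \<in> X\<close> unfolding is_metric_on_def L_def by (metis less_eq_real_def)
  have "dd x x = 0" using met \<open>x \<in> X\<close> by (simp add: is_metric_on_def)
  define m where "m = g (L / 2)"
  have "L / 2 \<in> {0..L}" using \<open>L > 0\<close> by simp
  then have "m \<in> X" and dist_x_m: "dd x m = L / 2"
    using g by (auto simp: geodesic_seg_def m_def L_def)
  \<comment> \<open>transpositions within a level that fix p and q are isometries fixing x and y,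
    so by uniqueness of geodesics they fix the midpoint m\<close>
  have "m \<circ> Transposition.transpose u w = m"
    if "level u = level w" "u \<notin> {p, q}" "w \<notin> {p, q}" for u w
  proof -
    interpret graph_involution UNIV layered_edge "Transposition.transpose u w"
      using \<open>level u = level w\<close> by (rule graph_involution_transpose_level)
    show ?thesis
      using CAT0_isometry_fixes_geodesic[OF cat \<open>x \<in> X\<close> \<open>y \<in> X\<close> g,
          of "\<lambda>z. z \<circ> Transposition.transpose u w" "L / 2"] \<open>L / 2 \<in> {0..L}\<close> that
      by (simp add: X_def dd_def rips_points_comp rips_dist_comp rips_vertex_comp x_def y_def
          m_def L_def)
  qed
  moreover have simplex: "rips_simplex UNIV layered_edge d (bsupp m)"
    using \<open>m \<in> X\<close> by (simp add: X_def rips_points_def)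
  ultimately have "bsupp m \<subseteq> {p, q}"
    using bsupp_subset_if_level_symmetric[of m "{p, q}"] by (auto simp: rips_simplex_def)
  moreover have "bsupp m \<noteq> {}" "\<not> {p, q} \<subseteq> bsupp m"
    using simplex far unfolding rips_simplex_def by (auto simp: not_le[symmetric])
  ultimately have "bsupp m = {p} \<or> bsupp m = {q}" by blast
  then have "m = x \<or> m = y"
    using rips_points_singleton_support[of m UNIV layered_edge d] \<open>m \<in> X\<close>
    by (auto simp: X_def x_def y_def)
  then show False
    using dist_x_m \<open>dd x x = 0\<close> \<open>L > 0\<close> by (auto simp: L_def)
qed

theorem corollary4p10:
  shows "\<exists>(V :: nat set) E. simple_graph V E \<and> connected_graph V E \<and>
     (\<forall>n::nat. \<exists>u\<in>V. \<exists>v\<in>V. gdist V E u v > n) \<and>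
     (\<exists>v\<in>V. infinite {w. E v w}) \<and>
     (\<exists>(T :: nat set) F. is_tree T F \<and> quasi_isometric V E T F) \<and>
     (\<forall>d::real. d > 0 \<longrightarrow> \<not> CAT0 (rips_points V E d) (rips_dist V E d))"
  using simple_graph_layered connected_graph_layered unbounded_gdist_layered
    infinite_neighbours_layered tree_ray quasi_isometric_layered_ray rips_layered_not_CAT0
  by blast

end
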